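(* Let $S\subseteq(0,\infty)$ contain more than one point and let $T$ be a closed subset of $(0,\infty)$ with $\varnothing\ne T\ne(0,\infty)$. If $S$ divides $T$, then there exist $a>1$ and $B\subseteq[1,a)$ such that $T=a^{\mathbb{Z}}B:=\{a^kb:k\in\mathbb{Z},\ b\in B\}$ and $a\le s'/s$ for all $s<s'$ in $S$.
   Context: For $S,T_1,T_2\subseteq(0,\infty)$, $S$ links $T_1$ and $T_2$ if there is $c>0$ with $cS\cap T_1\ne\varnothing$ and $cS\cap T_2\ne\varnothing$, where $cS=\{cs:s\in S\}$. $S$ divides $T$ (written $S\mid T$) if $S$ does not link $T$ and $T^C:=(0,\infty)\setminus T$. *)

theory Defs
  imports "HOL-Analysis.Analysis"
begin

definition scale_set :: "real \<Rightarrow> real set \<Rightarrow> real set" where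
  "scale_set c S = (\<lambda>s. c * s) ` S"

definition pos_compl :: "real set \<Rightarrow> real set" where
  "pos_compl T = {0<..} - T"

definition links :: "real set \<Rightarrow> real set \<Rightarrow> real set \<Rightarrow> bool" where
  "links S T1 T2 \<longleftrightarrow> (\<exists>c>0. scale_set c S \<inter> T1 \<noteq> {} \<and> scale_set c S \<inter> T2 \<noteq> {})"

definition divides :: "real set \<Rightarrow> real set \<Rightarrow> bool" where
  "divides S T \<longleftrightarrow> \<not> links S T (pos_compl T)"

end

theory Submission
  imports Defs
begin

text \<open>If \<open>S\<close> divides \<open>T\<close>, every ratio \<open>s'/s\<close> of points of \<open>S\<close> is a multiplicative period of \<open>T\<close>:
  the scaled copy of \<open>S\<close> through \<open>t\<close> also passes through \<open>(s'/s) t\<close> and lies entirely inside or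
  entirely outside \<open>T\<close>. The periods form a multiplicative group; since \<open>T\<close> is closed, nonempty and
  proper, this group cannot accumulate at \<open>1\<close> (otherwise the orbit of a point of \<open>T\<close> would be dense),
  so it is generated by its least element \<open>a > 1\<close>. Then \<open>T = a\<^sup>\<int> (T \<inter> [1,a))\<close>, and \<open>a \<le> s'/s\<close>
  by minimality.\<close>

definition mult_period :: "real set \<Rightarrow> real \<Rightarrow> bool" where
  "mult_period T g \<longleftrightarrow> g > 0 \<and> (\<forall>t>0. g * t \<in> T \<longleftrightarrow> t \<in> T)"

lemma mult_period_one: "mult_period T 1"
  unfolding mult_period_def by auto

lemma mult_period_mult: "mult_period T g \<Longrightarrow> mult_period T h \<Longrightarrow> mult_period T (g * h)"
  unfolding mult_period_def by (auto simp: mult.assoc)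

lemma mult_period_inverse:
  assumes "mult_period T g"
  shows "mult_period T (inverse g)"
  unfolding mult_period_def
proof (intro conjI allI impI)
  show "inverse g > 0" using assms by (simp add: mult_period_def)
next
  fix t :: real
  assume "t > 0"
  then have "g * (inverse g * t) \<in> T \<longleftrightarrow> inverse g * t \<in> T"
    using assms by (simp add: mult_period_def)
  moreover have "g * (inverse g * t) = t" using assms by (simp add: mult_period_def)
  ultimately show "inverse g * t \<in> T \<longleftrightarrow> t \<in> T" by simp
qed

lemma mult_period_divide: "mult_period T g \<Longrightarrow> mult_period T h \<Longrightarrow> mult_period T (g / h)"
  by (simp add: divide_inverse mult_period_mult mult_period_inverse)

lemma mult_period_power: "mult_period T g \<Longrightarrow> mult_period T (g ^ n)"
  by (induction n) (auto intro: mult_period_mult mult_period_one)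

lemma mult_period_powi: "mult_period T g \<Longrightarrow> mult_period T (g powi n)"
  by (auto simp: power_int_def intro: mult_period_power mult_period_inverse)

lemma mult_period_powi_mem_iff:
  "mult_period T g \<Longrightarrow> t > 0 \<Longrightarrow> g powi n * t \<in> T \<longleftrightarrow> t \<in> T"
  using mult_period_powi[of T g n] by (simp add: mult_period_def)

lemma ex_powi_bracket:
  fixes g y :: real
  assumes "g > 1" "y > 0"
  shows "\<exists>n::int. g powi n \<le> y \<and> y < g powi (n + 1)"
proof -
  define n where "n = \<lfloor>log g y\<rfloor>"
  have "g powr (real_of_int n) \<le> g powr (log g y)"
    using assms by (intro powr_mono) (auto simp: n_def)
  moreover have "g powr (log g y) < g powr (real_of_int (n + 1))"
    using assms by (intro powr_less_mono) (auto simp: n_def)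
  ultimately show ?thesis using assms
    by (intro exI[of _ n]) (simp add: powr_real_of_int' del: of_int_add)
qed

lemma divides_scale_set:
  assumes "divides S T" "S \<subseteq> {0<..}" "c > 0"
  shows "scale_set c S \<subseteq> T \<or> scale_set c S \<inter> T = {}"
proof -
  have "scale_set c S \<subseteq> {0<..}"
    using assms(2,3) by (auto simp: scale_set_def)
  then show ?thesis
    using assms(1,3) unfolding divides_def links_def pos_compl_def by blast
qed

lemma divides_ratio_mult_period:
  assumes "divides S T" "S \<subseteq> {0<..}" "s \<in> S" "s' \<in> S"
  shows "mult_period T (s' / s)"
  unfolding mult_period_def
proof (intro conjI allI impI)
  have "s > 0" "s' > 0" using assms(2-4) by auto
  then show "s' / s > 0" by simp
  fix t :: real
  assume "t > 0"
  define c where "c = t / s"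
  have "c > 0" using \<open>t > 0\<close> \<open>s > 0\<close> by (simp add: c_def)
  have "t \<in> scale_set c S"
    using \<open>s > 0\<close> assms(3) by (force simp: scale_set_def c_def)
  moreover have "s' / s * t \<in> scale_set c S"
    using assms(4) by (force simp: scale_set_def c_def)
  ultimately show "s' / s * t \<in> T \<longleftrightarrow> t \<in> T"
    using divides_scale_set[OF assms(1,2) \<open>c > 0\<close>] by blast
qed

lemma mult_periods_bounded_away_from_one:
  fixes T :: "real set"
  assumes "T \<subseteq> {0<..}" "closedin (top_of_set {0<..}) T" "T \<noteq> {}" "T \<noteq> {0<..}"
  shows "\<exists>d>1. \<forall>g. mult_period T g \<longrightarrow> g \<le> 1 \<or> d \<le> g"
proof (rule ccontr)
  assume small: "\<not> ?thesis"
  obtain C where C: "closed C" "T = {0<..} \<inter> C"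
    using assms(2) closedin_closed by blast
  obtain x where x: "x > 0" "x \<notin> T" using assms(1,4) by blast
  then have "x \<in> - C" using C by auto
  then obtain e where e: "e > 0" "ball x e \<subseteq> - C"
    using C(1) open_contains_ball[of "- C"] by (auto simp: closed_def)
  obtain t where t: "t \<in> T" "t > 0" using assms(1,3) by blast
  have "1 + e / x > 1" using e x by simp
  then have "\<not> (\<forall>g. mult_period T g \<longrightarrow> g \<le> 1 \<or> 1 + e / x \<le> g)"
    using small by blast
  then obtain g where g: "mult_period T g" "1 < g" "g < 1 + e / x"
    by (auto simp: not_le)
  obtain n where n: "g powi n \<le> x / t" "x / t < g powi (n + 1)"
    using ex_powi_bracket[of g "x / t"] g x t by auto
  define z where "z = g powi n * t"
  have "z \<in> T" using mult_period_powi_mem_iff[OF g(1)] t by (simp add: z_def)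
  have "z \<le> x" using n(1) t by (simp add: z_def field_simps)
  have "x < g * z" using n(2) t g(2) by (simp add: z_def field_simps power_int_add)
  then have "x - z < (g - 1) * z" by (simp add: algebra_simps)
  also have "\<dots> \<le> (g - 1) * x" using \<open>z \<le> x\<close> g(2) by (intro mult_left_mono) auto
  also have "\<dots> < e" using g(3) x by (simp add: field_simps)
  finally have "z \<in> ball x e" using \<open>z \<le> x\<close> by (simp add: dist_real_def)
  with \<open>z \<in> T\<close> C e show False by auto
qed

lemma least_mult_period:
  assumes "d > 1" and gap: "\<forall>g. mult_period T g \<longrightarrow> g \<le> 1 \<or> d \<le> g"
    and "mult_period T g\<^sub>0" "g\<^sub>0 > 1"
  shows "\<exists>a>1. mult_period T a \<and> (\<forall>g. mult_period T g \<and> 1 < g \<longrightarrow> a \<le> g)"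
proof -
  define G where "G = {g. mult_period T g \<and> g > 1}"
  have "G \<noteq> {}" using assms(3,4) by (auto simp: G_def)
  have "bdd_below G" unfolding bdd_below_def G_def by (rule exI[of _ 1]) auto
  define a where "a = Inf G"
  have lower: "a \<le> g" if "g \<in> G" for g
    using that \<open>bdd_below G\<close> by (simp add: a_def cInf_lower)
  have "d \<le> a"
    unfolding a_def using \<open>G \<noteq> {}\<close> gap by (intro cInf_greatest) (auto simp: G_def)
  then have "a > 1" using \<open>d > 1\<close> by simp
  have "a \<in> G"
  proof (rule ccontr)
    assume "a \<notin> G"
    have "a < a * d" using \<open>a > 1\<close> \<open>d > 1\<close> by simp
    then obtain g\<^sub>1 where g\<^sub>1: "g\<^sub>1 \<in> G" "g\<^sub>1 < a * d"
      using cInf_lessD[OF \<open>G \<noteq> {}\<close>] by (auto simp: a_def)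
    have "a < g\<^sub>1" using lower[OF g\<^sub>1(1)] \<open>a \<notin> G\<close> g\<^sub>1(1) by (auto simp: order_le_less)
    then obtain g\<^sub>2 where g\<^sub>2: "g\<^sub>2 \<in> G" "g\<^sub>2 < g\<^sub>1"
      using cInf_lessD[OF \<open>G \<noteq> {}\<close>] by (auto simp: a_def)
    have "a \<le> g\<^sub>2" using lower[OF g\<^sub>2(1)] .
    have "mult_period T (g\<^sub>1 / g\<^sub>2)"
      using g\<^sub>1(1) g\<^sub>2(1) by (auto simp: G_def intro: mult_period_divide)
    moreover have "1 < g\<^sub>1 / g\<^sub>2" using g\<^sub>2 \<open>a > 1\<close> \<open>a \<le> g\<^sub>2\<close> by simp
    moreover have "a * d \<le> g\<^sub>2 * d" using \<open>a \<le> g\<^sub>2\<close> \<open>d > 1\<close> by simp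
    then have "g\<^sub>1 < g\<^sub>2 * d" using g\<^sub>1(2) by linarith
    then have "g\<^sub>1 / g\<^sub>2 < d" using \<open>a > 1\<close> \<open>a \<le> g\<^sub>2\<close> by (simp add: field_simps)
    ultimately show False using gap by force
  qed
  then show ?thesis using \<open>a > 1\<close> lower by (auto simp: G_def)
qed

lemma mult_period_fundamental_domain:
  assumes "T \<subseteq> {0<..}" "mult_period T a" "a > 1"
  shows "T = {a powi k * b | k b. b \<in> T \<inter> {1..<a}}"
proof
  show "{a powi k * b | k b. b \<in> T \<inter> {1..<a}} \<subseteq> T"
    using mult_period_powi_mem_iff[OF assms(2)] by auto
  show "T \<subseteq> {a powi k * b | k b. b \<in> T \<inter> {1..<a}}"
  proof
    fix t assume "t \<in> T"
    then have "t > 0" using assms(1) by auto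
    obtain n where n: "a powi n \<le> t" "t < a powi (n + 1)"
      using ex_powi_bracket[OF assms(3) \<open>t > 0\<close>] by auto
    define b where "b = a powi (- n) * t"
    have "a powi n > 0" using assms(3) by simp
    have "b \<in> T"
      using mult_period_powi_mem_iff[OF assms(2) \<open>t > 0\<close>] \<open>t \<in> T\<close> by (simp add: b_def)
    moreover have "1 \<le> b" using n(1) \<open>a powi n > 0\<close>
      by (simp add: b_def power_int_minus field_simps)
    moreover have "b < a" using n(2) \<open>a powi n > 0\<close> assms(3)
      by (simp add: b_def power_int_minus field_simps power_int_add)
    moreover have "t = a powi n * b" using \<open>a powi n > 0\<close> assms(3)
      by (simp add: b_def power_int_minus field_simps)
    ultimately show "t \<in> {a powi k * b | k b. b \<in> T \<inter> {1..<a}}" by auto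
  qed
qed

theorem proposition6p3:
  fixes S T :: "real set"
  assumes "S \<subseteq> {0<..}"
    and "\<exists>s\<in>S. \<exists>s'\<in>S. s \<noteq> s'"
    and "T \<subseteq> {0<..}"
    and "closedin (top_of_set {0<..}) T"
    and "T \<noteq> {}" and "T \<noteq> {0<..}"
    and "divides S T"
  shows "\<exists>a::real. a > 1 \<and> (\<exists>B. B \<subseteq> {1..<a} \<and>
           T = {a powi k * b | k b. b \<in> B} \<and>
           (\<forall>s\<in>S. \<forall>s'\<in>S. s < s' \<longrightarrow> a \<le> s' / s))"
proof -
  obtain s\<^sub>0 s\<^sub>1 where "s\<^sub>0 \<in> S" "s\<^sub>1 \<in> S" "s\<^sub>0 < s\<^sub>1"
    using assms(2) by (metis linorder_neqE)
  then have g\<^sub>0: "mult_period T (s\<^sub>1 / s\<^sub>0)" "s\<^sub>1 / s\<^sub>0 > 1"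
    using divides_ratio_mult_period[OF assms(7,1)] assms(1) by auto
  obtain d where "d > 1" "\<forall>g. mult_period T g \<longrightarrow> g \<le> 1 \<or> d \<le> g"
    using mult_periods_bounded_away_from_one[OF assms(3-6)] by blast
  then obtain a where a: "a > 1" "mult_period T a"
    and least: "\<forall>g. mult_period T g \<and> 1 < g \<longrightarrow> a \<le> g"
    using least_mult_period[OF _ _ g\<^sub>0] by blast
  have "a \<le> s' / s" if "s \<in> S" "s' \<in> S" "s < s'" for s s'
  proof -
    have "s > 0" using that(1) assms(1) by auto
    then show ?thesis
      using least divides_ratio_mult_period[OF assms(7,1) that(1,2)] that(3) by simp
  qed
  moreover have "T = {a powi k * b | k b. b \<in> T \<inter> {1..<a}}"
    using mult_period_fundamental_domain[OF assms(3) a(2,1)] .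
  ultimately show ?thesis
    using a(1) by (intro exI[of _ a] conjI exI[of _ "T \<inter> {1..<a}"]) auto
qed

end
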